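(* In the setting below, the sequence $n\mapsto f(\hat x_n)$ is stationary, i.e. constant from some index on.
   Context: Let $x_1,\dots,x_N\in\mathbb{R}^q$ and let $d:\mathbb{R}^q\times\mathbb{R}^q\to\mathbb{R}_{\ge0}$ be a function such that for every $J\subseteq\{1,\dots,N\}$, $x\mapsto\sum_{i\in J}d(x,x_i)$ attains its minimum. Let $\mu$ be a choice function with $\mu(J)\in\operatorname{argmin}_x\sum_{i\in J}d(x,x_i)$ for each $J$. Let $\hat x_0\in\mathbb{R}^q$ and define $C_n=\{i: d(\hat x_n,x_i)<1\}$, $\hat x_{n+1}=\mu(C_n)$. Let $f(x)=\sum_{i=1}^N\max(1-d(x,x_i),0)$. *)

theory Defs
  imports "HOL-Analysis.Analysis"
begin

end

theory Submission
  imports Defs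
begin

text \<open>
  The density f(y) equals the gain \<Sum>i\<in>C. 1 - d(y, x_i) of the cluster C of indices with
  d(y, x_i) < 1. Moving y to the minimiser \<mu>(C) can only increase this gain, and the gain of
  C at \<mu>(C) is in turn bounded by the density at \<mu>(C). Hence f(x_n) \<le> g(C_n) \<le> f(x_(n+1)),
  where g(J) is the gain of J at \<mu>(J). As g takes only finitely many values (one for each
  J \<subseteq> {1..N}), the two interleaved increasing sequences become constant.
\<close>

lemma interleaved_finite_range_eventually_const:
  fixes f g :: "nat \<Rightarrow> 'a::linorder"
  assumes f_le_g: "\<And>n. f n \<le> g n" and g_le_f: "\<And>n. g n \<le> f (Suc n)"
    and fin: "finite (range g)"
  shows "\<exists>n0. \<forall>n\<ge>n0. f n = f n0"
proof -
  have "incseq g"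
    by (rule incseq_SucI) (rule order_trans[OF g_le_f f_le_g])
  obtain m where m: "g m = Max (range g)"
    using Max_in[OF fin] by auto
  have f_eq: "f n = g m" if "n \<ge> Suc m" for n
  proof (rule antisym)
    have "g n \<le> g m"
      unfolding m using fin by (rule Max_ge) simp
    with f_le_g show "f n \<le> g m"
      by (rule order_trans)
    have "g m \<le> g (n - 1)"
      using \<open>incseq g\<close> that by (simp add: incseq_def)
    also have "\<dots> \<le> f n"
      using g_le_f[of "n - 1"] that by simp
    finally show "g m \<le> f n" .
  qed
  show ?thesis
    by (rule exI[of _ "Suc m"]) (simp add: f_eq)
qed

locale mean_shift =
  fixes N :: nat
    and x :: "nat \<Rightarrow> 'a"
    and d :: "'a \<Rightarrow> 'a \<Rightarrow> real"
    and \<mu> :: "nat set \<Rightarrow> 'a"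
  assumes mu_min: "\<And>J z. J \<subseteq> {1..N} \<Longrightarrow> (\<Sum>i\<in>J. d (\<mu> J) (x i)) \<le> (\<Sum>i\<in>J. d z (x i))"
begin

definition kernel_density :: "'a \<Rightarrow> real"
  where "kernel_density y = (\<Sum>i=1..N. max (1 - d y (x i)) 0)"

definition cluster :: "'a \<Rightarrow> nat set"
  where "cluster y = {i \<in> {1..N}. d y (x i) < 1}"

definition gain :: "nat set \<Rightarrow> 'a \<Rightarrow> real"
  where "gain J y = (\<Sum>i\<in>J. 1 - d y (x i))"

lemma cluster_subset: "cluster y \<subseteq> {1..N}"
  unfolding cluster_def by auto

lemma kernel_density_eq_gain_cluster: "kernel_density y = gain (cluster y) y"
proof -
  have "gain (cluster y) y = (\<Sum>i=1..N. if d y (x i) < 1 then 1 - d y (x i) else 0)"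
    unfolding gain_def cluster_def by (rule sum.inter_filter) simp
  also have "\<dots> = kernel_density y"
    unfolding kernel_density_def by (intro sum.cong) auto
  finally show ?thesis by simp
qed

lemma gain_le_kernel_density:
  assumes "J \<subseteq> {1..N}"
  shows "gain J y \<le> kernel_density y"
proof -
  have "gain J y \<le> (\<Sum>i\<in>J. max (1 - d y (x i)) 0)"
    unfolding gain_def by (intro sum_mono) auto
  also have "\<dots> \<le> kernel_density y"
    unfolding kernel_density_def using assms by (intro sum_mono2) auto
  finally show ?thesis .
qed

lemma gain_le_gain_mu:
  assumes "J \<subseteq> {1..N}"
  shows "gain J y \<le> gain J (\<mu> J)"
  using mu_min[OF assms, of y] by (simp add: gain_def sum_subtractf)

lemma kernel_density_le_gain_mu_cluster: "kernel_density y \<le> gain (cluster y) (\<mu> (cluster y))"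
  using gain_le_gain_mu[OF cluster_subset] by (simp add: kernel_density_eq_gain_cluster)

lemma finite_range_gain_mu:
  "finite (range (\<lambda>n. gain (C n) (\<mu> (C n))))" if "\<And>n. C n \<subseteq> {1..N}"
proof (rule finite_subset)
  show "range (\<lambda>n. gain (C n) (\<mu> (C n))) \<subseteq> (\<lambda>J. gain J (\<mu> J)) ` Pow {1..N}"
    by (intro image_subsetI image_eqI[OF refl] PowI that)
qed simp

theorem kernel_density_iteration_eventually_const:
  assumes step: "\<And>n. xh (Suc n) = \<mu> (cluster (xh n))"
  shows "\<exists>n0. \<forall>n\<ge>n0. kernel_density (xh n) = kernel_density (xh n0)"
proof -
  let ?g = "\<lambda>n. gain (cluster (xh n)) (\<mu> (cluster (xh n)))"
  have "kernel_density (xh n) \<le> ?g n" for n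
    by (rule kernel_density_le_gain_mu_cluster)
  moreover have "?g n \<le> kernel_density (xh (Suc n))" for n
    unfolding step by (rule gain_le_kernel_density[OF cluster_subset])
  moreover have "finite (range ?g)"
    by (rule finite_range_gain_mu[of "\<lambda>n. cluster (xh n)", OF cluster_subset])
  ultimately show ?thesis
    by (rule interleaved_finite_range_eventually_const[where f = "\<lambda>n. kernel_density (xh n)" and g = ?g])
qed

end

theorem proposition2:
  fixes N :: nat
    and x :: "nat \<Rightarrow> real ^ 'q"
    and d :: "real ^ 'q \<Rightarrow> real ^ 'q \<Rightarrow> real"
    and \<mu> :: "nat set \<Rightarrow> real ^ 'q"
    and xh :: "nat \<Rightarrow> real ^ 'q"
  assumes d_nonneg: "\<And>a b. d a b \<ge> 0"
    and min_exists: "\<And>J. J \<subseteq> {1..N} \<Longrightarrow>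
           \<exists>y. \<forall>z. (\<Sum>i\<in>J. d y (x i)) \<le> (\<Sum>i\<in>J. d z (x i))"
    and mu_min: "\<And>J z. J \<subseteq> {1..N} \<Longrightarrow>
           (\<Sum>i\<in>J. d (\<mu> J) (x i)) \<le> (\<Sum>i\<in>J. d z (x i))"
    and step: "\<And>n. xh (Suc n) = \<mu> {i \<in> {1..N}. d (xh n) (x i) < 1}"
  shows "\<exists>n0. \<forall>n\<ge>n0.
           (\<Sum>i=1..N. max (1 - d (xh n) (x i)) 0) = (\<Sum>i=1..N. max (1 - d (xh n0) (x i)) 0)"
proof -
  interpret mean_shift N x d \<mu>
    using mu_min by unfold_locales
  have "xh (Suc n) = \<mu> (cluster (xh n))" for n
    unfolding cluster_def by (rule step)
  from kernel_density_iteration_eventually_const[of xh, OF this]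
  show ?thesis
    unfolding kernel_density_def .
qed

end
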